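(* Let $m\ge 2$, let $\bar l(x)=\sum_{v=0}^{m} b_v x^v$ be a primitive polynomial of degree $m$ over $\mathbb{F}_2$, and let $l(x)=\sum_{v=0}^m b_v x^{2^v}$. Then exactly one of $c_0=\sum_{j\ge0} b_{2j}$ and $c_1=\sum_{j\ge 0} b_{2j+1}$ (with $b_u=0$ for $u>m$) is zero, and the polynomial $$\frac{l(x)^2+l(x)+1}{x^2+x+1}$$ is an irreducible polynomial of degree $2(2^m-1)$ over $\mathbb{F}_2$.
   Context: A primitive polynomial of degree $m$ over $\mathbb{F}_2$ is a monic irreducible polynomial of degree $m$ whose roots generate $\mathbb{F}_{2^m}^*$. *)

theory Defs
  imports "HOL-Library.Z2" "HOL-Computational_Algebra.Polynomial" "HOL-Computational_Algebra.Polynomial_Factorial"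
begin

text \<open>A primitive polynomial of degree m over F_2: monic,
irreducible, of degree m, and a root (the class of x in F_2[x]/(p)) has
multiplicative order exactly 2^m - 1, i.e. it generates F_(2^m)^*.\<close>

definition primitive_poly :: "nat \<Rightarrow> bit poly \<Rightarrow> bool" where
  "primitive_poly m p \<longleftrightarrow>
     degree p = m \<and> lead_coeff p = 1 \<and> irreducible p \<and>
     p dvd ([:0,1:] ^ (2^m - 1) - 1) \<and>
     (\<forall>k. 0 < k \<and> k < 2^m - 1 \<longrightarrow> \<not> p dvd ([:0,1:] ^ k - 1))"

definition linearized :: "bit poly \<Rightarrow> bit poly" where
  "linearized p = (\<Sum>v\<le>degree p. monom (coeff p v) (2^v))"

end

theory Submission
  imports Defs "Berlekamp_Zassenhaus.Distinct_Degree_Factorization"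
begin

(* Over F_2 let L be the linearized map  sum b_v x^v |-> sum b_v x^(2^v),  so l = L(lbar);
   write Y = x + 1, Q = x^2 + x + 1, f = l^2 + l + 1 and N = 2^m - 1 (an odd number).
   L is additive and L(x a) = L(a)^2, hence for every p the "kernel" {a. p dvd L(a)} is an
   ideal of F_2[x].
   (a) c0 + c1 = lbar(1) = 1, since lbar is irreducible of degree >= 2 and has no root.
   (b) Q divides L(Y^2) = x^4 + x, so modulo Q the value L(a) only depends on a mod Y^2,
       which is 1 or x when a(1) = 1; thus L(lbar) is x or x^2 modulo Q, a root of
       t^2 + t + 1.  Degrees give deg (f / Q) = 2^(m+1) - 2 = 2N.
   (c) Let p be an irreducible factor of f / Q.  As f' = 1, f is squarefree and p does not
       divide Q.  The kernel of p contains Y^2 lbar but neither Y lbar nor Y^2, and a Bezout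
       argument shows that it then consists of common multiples of lbar and Y^2.  As p
       divides x^(2^d) - x = L(x^d - 1) for d = deg p, lbar and Y^2 divide x^d - 1, i.e.
       N | d and d is even.  So deg p >= 2N = deg (f / Q), and f / Q is irreducible. *)

(* The Berlekamp-Zassenhaus theories also define constants primitive_poly (content one)
   and smult (module scalar multiplication); hide them so that the names refer to the
   primitive polynomials of Defs and to polynomial scalar multiplication. *)
hide_const (open) comm_semiring_1_class.primitive_poly
hide_const (open) module.smult

section \<open>Arithmetic in characteristic two\<close>

lemma bit_cases: "(x::bit) = 0 \<or> x = 1"
  by (cases x) auto

lemma bit_poly_add_self [simp]: "(p::bit poly) + p = 0"
proof -
  have "\<And>x::bit. x + x = 0" using bit_cases by auto
  thus ?thesis by (intro poly_eqI) (simp only: coeff_add coeff_0)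
qed

lemma bit_poly_add_self_left [simp]: "(p::bit poly) + (p + q) = q"
  by (simp flip: add.assoc)

lemma bit_poly_uminus [simp]: "- (p::bit poly) = p"
  by (simp add: poly_eq_iff)

lemma bit_poly_minus: "(p::bit poly) - q = p + q"
  by (metis bit_poly_uminus diff_conv_add_uminus)

lemma bit_poly_square_add: "((a::bit poly) + b)^2 = a^2 + b^2"
proof -
  have "(a + b)^2 = a^2 + b^2 + (a*b + a*b)" by (simp add: power2_eq_square algebra_simps)
  thus ?thesis by simp
qed

lemma bit_poly_square_sum: "(\<Sum>i\<in>S. (f i :: bit poly))^2 = (\<Sum>i\<in>S. (f i)^2)"
  by (induct S rule: infinite_finite_induct) (auto simp: bit_poly_square_add)

lemma monom_square: "(monom (c::bit) n)^2 = monom c (2*n)"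
  using bit_cases[of c] by (auto simp: monom_power mult.commute)

section \<open>The linearized associate\<close>

lemma linearized_upto:
  assumes "degree a < n"
  shows "linearized a = (\<Sum>v<n. monom (coeff a v) (2^v))"
  unfolding linearized_def
  by (rule sum.mono_neutral_left) (use assms in \<open>auto simp: coeff_eq_0\<close>)

lemma linearized_add: "linearized (a + b) = linearized a + linearized b"
proof -
  define n where "n = Suc (max (degree a) (degree b))"
  have "degree (a + b) < n" "degree a < n" "degree b < n"
    using degree_add_le_max[of a b] unfolding n_def by linarith+
  thus ?thesis by (simp only: linearized_upto coeff_add add_monom[symmetric] sum.distrib)
qed

lemma linearized_0 [simp]: "linearized 0 = 0"
  by (simp add: linearized_def)

lemma linearized_1 [simp]: "linearized 1 = [:0,1:]"
  by (simp add: linearized_def monom_altdef)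

lemma linearized_smult: "linearized (smult c a) = smult c (linearized a)"
  using bit_cases[of c] by auto

lemma linearized_pCons_0 [simp]: "linearized (pCons 0 a) = (linearized a)^2"
proof -
  let ?n = "Suc (degree a)"
  have "degree (pCons 0 a) < Suc ?n"
    by (metis degree_pCons_le le_imp_less_Suc)
  hence "linearized (pCons 0 a) = (\<Sum>v<Suc ?n. monom (coeff (pCons 0 a) v) (2^v))"
    by (rule linearized_upto)
  also have "\<dots> = (\<Sum>v<?n. (monom (coeff a v) (2^v))^2)"
    by (simp add: sum.lessThan_Suc_shift monom_square del: sum.lessThan_Suc)
  also have "\<dots> = (linearized a)^2"
    by (simp add: bit_poly_square_sum linearized_upto[of a ?n] del: sum.lessThan_Suc)
  finally show ?thesis .
qed

lemma linearized_pCons: "linearized (pCons c a) = smult c [:0,1:] + (linearized a)^2"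
proof -
  have "pCons c a = smult c 1 + pCons 0 a" by simp
  thus ?thesis by (simp only: linearized_add linearized_smult linearized_pCons_0 linearized_1)
qed

lemma linearized_x_power: "linearized ([:0,1:]^k) = [:0,1:]^(2^k)"
  by (induct k) (simp_all add: power_mult[symmetric] mult.commute)

lemma dvd_linearized_mult:
  assumes "p dvd linearized b"
  shows "p dvd linearized (a * b)"
proof (induct a)
  case (pCons c a)
  have "pCons c a * b = smult c b + pCons 0 (a * b)" by simp
  hence "linearized (pCons c a * b) = smult c (linearized b) + (linearized (a*b))^2"
    by (simp only: linearized_add linearized_smult linearized_pCons_0)
  thus ?case using pCons assms by (auto intro!: dvd_add dvd_smult simp: power2_eq_square)
qed simp

lemma linearized_times_x_plus_1: "linearized ([:1,1:] * a) = (linearized a)^2 + linearized a"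
  by (simp add: linearized_add add.commute)

lemma linearized_times_x_plus_1_square:
  "linearized ([:1,1:]^2 * a) =
     ((linearized a)^2 + linearized a) * ((linearized a)^2 + linearized a + 1)"
proof -
  let ?t = "linearized a"
  have "linearized ([:1,1:]^2 * a) = (?t^2 + ?t)^2 + (?t^2 + ?t)"
    by (simp only: power2_eq_square mult.assoc linearized_times_x_plus_1)
  also have "\<dots> = (?t^2 + ?t) * (?t^2 + ?t + 1)"
    by (simp add: power2_eq_square algebra_simps)
  finally show ?thesis .
qed

text \<open>Over \<open>F\<^sub>2\<close> every nonzero polynomial is monic, so \<open>deg L(a) = 2\<^bsup>deg a\<^esup>\<close>.\<close>

lemma degree_linearized:
  assumes "a \<noteq> 0"
  shows "degree (linearized a) = 2 ^ degree a"
proof -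
  let ?d = "degree a"
  have lc: "coeff a ?d = 1" using assms bit_cases[of "coeff a ?d"] by auto
  have "linearized a = (\<Sum>v<?d. monom (coeff a v) (2^v)) + monom 1 (2^?d)"
    using lc by (simp add: linearized_upto[of a "Suc ?d"])
  moreover have "degree (\<Sum>v<?d. monom (coeff a v) (2^v)) < 2^?d"
  proof (rule degree_sum_less)
    fix v assume "v \<in> {..<?d}"
    hence "(2::nat)^v < 2^?d" by simp
    thus "degree (monom (coeff a v) (2^v)) < 2^?d" using degree_monom_le le_less_trans by blast
  qed simp
  ultimately show ?thesis by (simp add: degree_add_eq_right degree_monom_eq)
qed

text \<open>All terms of \<open>L(a)\<close> except \<open>b\<^sub>0 x\<close> have even degree, so they vanish on differentiation.\<close>

lemma pderiv_linearized: "pderiv (linearized a) = [:coeff a 0:]"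
proof (cases a)
  case (pCons c a')
  thus ?thesis by (simp add: linearized_pCons pderiv_power pderiv_smult pderiv_pCons pderiv_add)
qed

section \<open>Two facts about \<open>GF(2)\<close> via \<open>bool mod_ring\<close>\<close>

text \<open>The field \<open>bit\<close> is isomorphic to the prime field \<open>bool mod_ring\<close> of the
  Berlekamp-Zassenhaus library, and so are their polynomial rings.\<close>

definition gf2 :: "bit \<Rightarrow> bool mod_ring" where
  "gf2 x = (if x = 0 then 0 else 1)"

lemma mod_ring_bool_cases: "(y::bool mod_ring) = 0 \<or> y = 1"
  by transfer auto

interpretation gf2: field_isom gf2
proof unfold_locales
  have two: "(1::bool mod_ring) + 1 = 0" by transfer simp
  fix x y :: bit
  show "gf2 (x + y) = gf2 x + gf2 y" "gf2 (x * y) = gf2 x * gf2 y"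
    using bit_cases[of x] bit_cases[of y] two by (auto simp: gf2_def)
  show "gf2 1 = 1" "gf2 0 = 0" by (simp_all add: gf2_def)
  show "surj gf2"
  proof (rule surjI)
    fix y :: "bool mod_ring"
    show "gf2 (if y = 0 then 0 else 1) = y"
      using mod_ring_bool_cases[of y] by (auto simp: gf2_def)
  qed
qed

interpretation gf2_map: map_poly_inj_idom_hom gf2 ..

interpretation gf2_poly: comm_ring_isom "map_poly gf2"
proof unfold_locales
  show "surj (map_poly gf2)"
    by (rule surjI[of _ "map_poly (Hilbert_Choice.inv gf2)"]) (simp add: map_poly_map_poly o_def)
qed

lemma irreducible_dvd_frobenius:
  assumes "irreducible (p::bit poly)"
  shows "p dvd [:0,1:]^(2^degree p) - [:0,1:]"
proof -
  have "degree (map_poly gf2 p) = degree p" by (simp add: degree_map_poly)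
  hence "map_poly gf2 p dvd (monom 1 1)^(CARD(bool)^degree p) - monom 1 1"
    using assms by (intro degree_divisor1) simp_all
  moreover have "(monom 1 1)^(CARD(bool)^degree p) - monom 1 1
      = map_poly gf2 ([:0,1:]^(2^degree p) - [:0,1:])"
    by (simp add: monom_altdef hom_distribs)
  ultimately show ?thesis by (simp only: gf2_poly.hom_dvd_hom)
qed

lemma irreducible_bezout:
  assumes "irreducible (a::bit poly)" and "\<not> a dvd b"
  shows "\<exists>s t. s * a + t * b = 1"
proof -
  have "prime_elem (map_poly gf2 a)"
    using assms(1) by (simp add: field_poly_irreducible_imp_prime)
  moreover have "\<not> map_poly gf2 a dvd map_poly gf2 b" using assms(2) by simp
  ultimately have "gcd (map_poly gf2 a) (map_poly gf2 b) = 1"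
    by (meson coprime_iff_gcd_eq_1 prime_elem_imp_coprime)
  then obtain s' t' where st': "s' * map_poly gf2 a + t' * map_poly gf2 b = 1"
    by (metis bezout_coefficients_fst_snd)
  obtain s t where "s' = map_poly gf2 s" "t' = map_poly gf2 t"
    using gf2_poly.surj by (metis surjD)
  with st' have "map_poly gf2 (s * a + t * b) = map_poly gf2 1" by (simp add: hom_distribs)
  thus ?thesis by (blast dest: gf2_map.injectivity)
qed

lemma sum_even_odd_split:
  "(\<Sum>i<2*(n::nat). (f i :: 'a::comm_monoid_add)) = (\<Sum>i<n. f (2*i)) + (\<Sum>i<n. f (2*i+1))"
  by (induct n) (simp_all add: add_ac)

lemma even_odd_coeff_sum:
  fixes a :: "'a::comm_semiring_1 poly"
  assumes "degree a \<le> m"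
  shows "(\<Sum>j\<le>m. coeff a (2*j)) + (\<Sum>j\<le>m. coeff a (2*j+1)) = poly a 1"
proof -
  have "(\<Sum>j\<le>m. coeff a (2*j)) + (\<Sum>j\<le>m. coeff a (2*j+1)) = (\<Sum>i<2 * Suc m. coeff a i)"
    unfolding lessThan_Suc_atMost[symmetric] by (rule sum_even_odd_split[symmetric])
  also have "\<dots> = (\<Sum>i\<le>degree a. coeff a i)"
    by (rule sum.mono_neutral_right) (use assms in \<open>auto simp: coeff_eq_0\<close>)
  also have "\<dots> = poly a 1" by (simp add: poly_altdef)
  finally show ?thesis .
qed

lemma irreducible_no_root:
  fixes p :: "'a::field poly"
  assumes "irreducible p" and "degree p \<ge> 2"
  shows "poly p c \<noteq> 0"
proof
  assume "poly p c = 0"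
  then obtain q where q: "p = [:-c,1:] * q" by (metis dvdE poly_eq_0_iff_dvd)
  have "\<not> is_unit [:-c,1:]" by (simp add: is_unit_iff_degree)
  hence "is_unit q" using irreducibleD[OF assms(1) q] by blast
  hence "q \<noteq> 0" "degree q = 0" by (auto simp: is_unit_iff_degree)
  hence "degree p = 1" unfolding q by (subst degree_mult_eq) auto
  thus False using assms(2) by simp
qed

lemma pderiv_one_no_square_factor:
  fixes f p :: "'a::idom poly"
  assumes "pderiv f = 1" and "p * p dvd f"
  shows "p dvd 1"
proof -
  from assms(2) obtain s where "f = p * (p * s)" by (metis dvdE mult.assoc)
  hence "pderiv f = pderiv p * (p * s) + p * pderiv (p * s)" by (simp add: pderiv_mult)
  hence "p dvd pderiv f" by simp
  thus ?thesis using assms(1) by simp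
qed

lemma irreducible_multiple_of_same_degree:
  fixes p g :: "'a::field poly"
  assumes "irreducible p" and "p dvd g" and "g \<noteq> 0" and "degree g \<le> degree p"
  shows "irreducible g"
proof -
  obtain u where g: "g = p * u" using assms(2) by (rule dvdE)
  with assms(3) have "p \<noteq> 0" "u \<noteq> 0" by auto
  hence "degree g = degree p + degree u" unfolding g by (rule degree_mult_eq)
  with assms(4) \<open>u \<noteq> 0\<close> have "is_unit u" by (simp add: is_unit_iff_degree)
  thus ?thesis using assms(1) g by (simp add: irreducible_mult_unit_right)
qed

lemma degree_square_plus_self_plus_one:
  fixes t :: "'a::idom poly"
  assumes "degree t \<ge> 1"
  shows "degree (t^2 + t + 1) = 2 * degree t"
proof -
  have "t \<noteq> 0" using assms by auto
  hence "degree (t^2) = 2 * degree t" by (simp add: degree_power_eq)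
  with assms show ?thesis by (simp add: degree_add_eq_left)
qed

lemma dvd_power_minus_one_iff:
  fixes a x :: "'a::comm_ring_1"
  assumes "0 < N" and "a dvd x^N - 1" and "\<And>k. 0 < k \<Longrightarrow> k < N \<Longrightarrow> \<not> a dvd x^k - 1"
  shows "a dvd x^k - 1 \<longleftrightarrow> N dvd k"
proof -
  have multiple: "a dvd x^(N*j) - 1" for j
  proof -
    have "(x^N)^j - 1 = (x^N - 1) * (\<Sum>i<j. (x^N)^i)" by (rule power_diff_1_eq)
    thus ?thesis using assms(2) by (simp add: power_mult)
  qed
  define r where "r = k mod N"
  define j where "j = k div N"
  have "x^k - 1 = x^r * (x^(N*j) - 1) + (x^r - 1)"
  proof -
    have "k = r + N * j" unfolding r_def j_def by simp
    thus ?thesis by (simp add: power_add algebra_simps)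
  qed
  hence "a dvd x^k - 1 \<longleftrightarrow> a dvd x^r - 1"
    using multiple by (metis dvd_add_right_iff dvd_mult)
  also have "\<dots> \<longleftrightarrow> r = 0"
    using assms(3)[of r] assms(1) unfolding r_def by auto
  also have "\<dots> \<longleftrightarrow> N dvd k" unfolding r_def by (simp add: dvd_eq_mod_eq_0)
  finally show ?thesis .
qed

section \<open>Primitive polynomials over \<open>F\<^sub>2\<close>\<close>

lemma odd_mersenne:
  assumes "m \<ge> 1"
  shows "odd (2^m - 1 :: nat)"
  using assms by (simp add: even_diff_nat)

lemma primitive_poly_dvd_iff:
  assumes "primitive_poly m p"
  shows "p dvd [:0,1:]^k - 1 \<longleftrightarrow> (2^m - 1) dvd k"
proof -
  from assms have "irreducible p" "degree p = m" unfolding Defs.primitive_poly_def by auto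
  hence "m \<noteq> 0" by (auto simp: is_unit_iff_degree dest: irreducible_not_unit)
  hence "0 < (2::nat)^m - 1" using one_less_power[of "2::nat" m] by simp
  thus ?thesis using assms unfolding Defs.primitive_poly_def by (intro dvd_power_minus_one_iff) auto
qed

text \<open>A primitive polynomial of degree at least two has no root, so it takes the value 1 at
  0 and at 1.\<close>

lemma primitive_poly_values:
  assumes "primitive_poly m p" and "m \<ge> 2"
  shows "poly p 0 = 1" and "poly p 1 = 1"
  using assms irreducible_no_root[of p 0] irreducible_no_root[of p 1] bit_cases
  unfolding Defs.primitive_poly_def by metis+

section \<open>Divisibility by \<open>x\<^sup>2 + x + 1\<close>\<close>

lemma Q_eq: "[:1,1,1:] = [:0,1:]^2 + [:0,1:] + (1::bit poly)"
  by (simp add: poly_eq_iff coeff_pCons power2_eq_square split: nat.split)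

lemma linear_bit_poly_with_value_one:
  assumes "degree (r::bit poly) \<le> 1" and "poly r 1 = 1"
  shows "r = 1 \<or> r = [:0,1:]"
proof -
  have r: "r = [:coeff r 0, coeff r 1:]"
    by (rule poly_eqI) (use assms(1) in \<open>auto simp: coeff_pCons coeff_eq_0 split: nat.split\<close>)
  have "coeff r 0 + coeff r 1 = 1" using assms(2) by (subst (asm) r) simp
  thus ?thesis using bit_cases[of "coeff r 0"] bit_cases[of "coeff r 1"] r by auto
qed

text \<open>By the Frobenius, with \<open>t\<close> also \<open>t\<^sup>2\<close> is a root of \<open>t\<^sup>2 + t + 1\<close> modulo \<open>Q\<close>.\<close>

lemma square_plus_one_of_square: "((t::bit poly)^2)^2 + t^2 + 1 = (t^2 + t + 1)^2"
  by (simp add: bit_poly_square_add)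

text \<open>\<open>L((x + 1)\<^sup>2) = (x\<^sup>2 + x) Q\<close>, so \<open>Q\<close> divides \<open>L\<close> of every multiple of \<open>(x + 1)\<^sup>2\<close>.\<close>

lemma Q_dvd_linearized_multiple:
  "[:1,1,1:] dvd linearized (q * [:1,1:]^2)"
proof (rule dvd_linearized_mult)
  have "linearized ([:1,1:]^2 * 1) = ([:0,1:]^2 + [:0,1:]) * [:1,1,1:]"
    by (simp only: linearized_times_x_plus_1_square linearized_1 Q_eq)
  thus "[:1,1,1:] dvd linearized ([:1,1:]^2)" by (metis dvd_triv_right mult_1_right)
qed

text \<open>If \<open>a(1) = 1\<close> then \<open>L(a)\<close> is congruent to \<open>x\<close> or \<open>x\<^sup>2\<close> modulo \<open>Q\<close>, both roots of
  \<open>t\<^sup>2 + t + 1\<close> modulo \<open>Q\<close>.\<close>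

lemma Q_dvd_square_plus_self_plus_one:
  assumes "poly a 1 = 1"
  shows "[:1,1,1:] dvd (linearized a)^2 + linearized a + 1"
proof -
  define r where "r = a mod [:1,1:]^2"
  have a: "a = a div [:1,1:]^2 * [:1,1:]^2 + r"
    unfolding r_def by (rule div_mult_mod_eq[symmetric])
  have "degree r \<le> 1"
    using degree_mod_less'[of "[:1,1:]^2" a] unfolding r_def by (fastforce simp: degree_power_eq)
  moreover have "poly r 1 = 1" using assms by (subst (asm) a) simp
  ultimately have "r = 1 \<or> r = [:0,1:]" by (rule linear_bit_poly_with_value_one)
  hence "linearized r = [:0,1:] \<or> linearized r = [:0,1:]^2"
    using linearized_x_power[of 1] by auto
  moreover have "[:1,1,1:] dvd ([:0,1:]^2)^2 + [:0,1:]^2 + (1 :: bit poly)"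
  proof -
    have "([:0,1:]^2)^2 + [:0,1:]^2 + 1 = ([:1,1,1:] :: bit poly)^2"
      by (simp only: square_plus_one_of_square Q_eq)
    thus ?thesis by (simp only: power2_eq_square[of "[:1,1,1:]"] dvd_triv_left)
  qed
  ultimately have root: "[:1,1,1:] dvd (linearized r)^2 + linearized r + 1"
    by (elim disjE) (simp_all only: Q_eq dvd_refl)
  let ?l = "linearized a" and ?w = "linearized r"
  have "?l = linearized (a div [:1,1:]^2 * [:1,1:]^2) + ?w"
    by (subst a) (simp only: linearized_add)
  hence diff: "[:1,1,1:] dvd ?l - ?w" using Q_dvd_linearized_multiple by simp
  have "?l^2 + ?l + 1 = (?w^2 + ?w + 1) + (?l - ?w) * (?l + ?w + 1)"
    by (simp add: power2_eq_square algebra_simps)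
  thus ?thesis using root diff by (metis dvd_add dvd_mult2)
qed

section \<open>Ideals of \<open>F\<^sub>2[x]\<close> containing \<open>(x + 1)\<^sup>2 b\<close>\<close>

text \<open>In an ideal \<open>I\<close> of \<open>F\<^sub>2[x]\<close>: if \<open>q\<close> is irreducible, \<open>g q \<in> I\<close> and \<open>g \<notin> I\<close>, then
  \<open>q\<close> divides every element of \<open>I\<close>; otherwise Bezout would put \<open>g\<close> itself into \<open>I\<close>.\<close>

lemma ideal_contained_in_multiples:
  fixes I :: "bit poly set"
  assumes add: "\<And>a b. a \<in> I \<Longrightarrow> b \<in> I \<Longrightarrow> a + b \<in> I"
    and mult: "\<And>a b. b \<in> I \<Longrightarrow> a * b \<in> I"
    and "irreducible q" and "g * q \<in> I" and "g \<notin> I" and "c \<in> I"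
  shows "q dvd c"
proof (rule ccontr)
  assume "\<not> q dvd c"
  then obtain s t where st: "s * q + t * c = 1" using irreducible_bezout assms(3) by blast
  have "g = g * (s * q + t * c)" using st by simp
  hence "g = s * (g * q) + (g * t) * c" by (simp add: algebra_simps)
  hence "g \<in> I" using add mult assms(4,6) by metis
  thus False using assms(5) by simp
qed

lemma x_power_minus_one: "[:0,1:]^k - 1 = [:1,1:] * (\<Sum>i<k. [:0,1:]^i :: bit poly)"
proof -
  have "[:0,1:] - 1 = ([:1,1:] :: bit poly)"
    by (simp add: poly_eq_iff coeff_pCons split: nat.split)
  thus ?thesis using power_diff_1_eq[of "[:0,1:] :: bit poly" k] by simp
qed

lemma of_nat_bit: "(of_nat k :: bit) = (if even k then 0 else 1)"
  by (induct k) auto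

text \<open>The geometric sum \<open>1 + x + \<dots> + x\<^bsup>k-1\<^esup>\<close> takes the value \<open>k\<close> at 1.\<close>

lemma x_plus_1_dvd_geometric_sum_imp_even:
  assumes "[:1,1:] dvd (\<Sum>i<k. [:0,1:]^i :: bit poly)"
  shows "even k"
proof -
  have "poly (\<Sum>i<k. [:0,1:]^i :: bit poly) 1 = 0" using assms by (auto elim!: dvdE)
  moreover have "poly (\<Sum>i<k. [:0,1:]^i :: bit poly) 1 = of_nat k" by (simp add: poly_sum)
  ultimately show ?thesis by (simp add: of_nat_bit split: if_splits)
qed

lemma x_power_minus_one_in_ideal:
  fixes I :: "bit poly set" and b :: "bit poly"
  assumes add: "\<And>a b. a \<in> I \<Longrightarrow> b \<in> I \<Longrightarrow> a + b \<in> I"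
    and mult: "\<And>a b. b \<in> I \<Longrightarrow> a * b \<in> I"
    and "irreducible b" and "[:1,1:]^2 * b \<in> I" and "[:1,1:] * b \<notin> I" and "[:1,1:]^2 \<notin> I"
    and k: "[:0,1:]^k - 1 \<in> I"
  shows "b dvd [:0,1:]^k - 1" and "even k"
proof -
  show "b dvd [:0,1:]^k - 1"
    using ideal_contained_in_multiples[OF add mult assms(3) _ assms(6) k] assms(4) by simp
  (* The ideal quotient J = {a. (x + 1) a \<in> I} contains (x + 1) b but not b. *)
  define J where "J = {a. [:1,1:] * a \<in> I}"
  have "[:1,1:] dvd (\<Sum>i<k. [:0,1:]^i :: bit poly)"
  proof (rule ideal_contained_in_multiples[of J])
    show "a \<in> J \<Longrightarrow> c \<in> J \<Longrightarrow> a + c \<in> J" for a c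
      unfolding J_def using add by (metis mem_Collect_eq distrib_left)
    show "c \<in> J \<Longrightarrow> a * c \<in> J" for a c
      unfolding J_def using mult by (metis mem_Collect_eq mult.left_commute)
    show "irreducible ([:1,1:] :: bit poly)"
      by (simp add: linear_irreducible\<^sub>d flip: irreducible_connect_field)
    show "b * [:1,1:] \<in> J"
      using assms(4) unfolding J_def by (simp only: mem_Collect_eq power2_eq_square ac_simps)
    show "b \<notin> J" using assms(5) unfolding J_def by simp
    show "(\<Sum>i<k. [:0,1:]^i) \<in> J"
      using k unfolding J_def x_power_minus_one by (simp only: mem_Collect_eq)
  qed
  thus "even k" by (rule x_plus_1_dvd_geometric_sum_imp_even)
qed

section \<open>The kernel of a divisor of \<open>l\<^sup>2 + l + 1\<close>\<close>

text \<open>For a divisor \<open>p\<close> of \<open>f = l\<^sup>2 + l + 1\<close> with \<open>l = L(lbar)\<close>, the ideal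
  \<open>{a. p dvd L(a)}\<close> contains \<open>(x + 1)\<^sup>2 lbar\<close> (as \<open>L\<close> of it is \<open>(l\<^sup>2 + l) f\<close>), does not
  contain \<open>(x + 1) lbar\<close> (as \<open>L\<close> of it is \<open>f - 1\<close>), and contains \<open>(x + 1)\<^sup>2\<close> only if
  \<open>p\<close> divides \<open>Q\<close>.\<close>

lemma kernel_of_divisor:
  fixes lbar p :: "bit poly"
  assumes "poly lbar 1 = 1" and "\<not> is_unit p"
    and p_f: "p dvd (linearized lbar)^2 + linearized lbar + 1"
    and p_Q: "\<not> p dvd [:1,1,1:]"
  defines "I \<equiv> {a. p dvd linearized a}"
  shows "[:1,1:]^2 * lbar \<in> I" and "[:1,1:] * lbar \<notin> I" and "[:1,1:]^2 \<notin> I"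
proof -
  let ?l = "linearized lbar"
  show "[:1,1:]^2 * lbar \<in> I"
    unfolding I_def mem_Collect_eq linearized_times_x_plus_1_square using p_f by (rule dvd_mult)
  have L_Y_lbar: "linearized ([:1,1:] * lbar) = ?l^2 + ?l" by (rule linearized_times_x_plus_1)
  show "[:1,1:] * lbar \<notin> I"
  proof
    assume "[:1,1:] * lbar \<in> I"
    hence "p dvd ?l^2 + ?l" unfolding I_def by (simp only: mem_Collect_eq L_Y_lbar)
    hence "p dvd 1" using p_f by (simp add: dvd_add_right_iff)
    thus False using assms(2) by simp
  qed
  show "[:1,1:]^2 \<notin> I"
  proof
    assume "[:1,1:]^2 \<in> I"
    have "[:- 1,1:] dvd lbar - 1" unfolding poly_eq_0_iff_dvd[symmetric] using assms(1) by simp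
    moreover have "[:- 1,1:] = ([:1,1:] :: bit poly)" by simp
    ultimately obtain q where "lbar - 1 = [:1,1:] * q" by (metis dvdE)
    hence "lbar = [:1,1:] * q + 1" by (metis diff_add_cancel)
    hence "[:1,1:] * lbar = q * [:1,1:]^2 + [:1,1:] * 1"
      by (simp only: power2_eq_square distrib_left mult_1_right ac_simps)
    hence "linearized ([:1,1:] * lbar) = linearized (q * [:1,1:]^2) + linearized ([:1,1:] * 1)"
      by (simp only: linearized_add)
    hence "?l^2 + ?l = linearized (q * [:1,1:]^2) + ([:0,1:]^2 + [:0,1:])"
      by (simp only: linearized_times_x_plus_1 linearized_1)
    hence "[:1,1,1:] = (?l^2 + ?l + 1) + linearized (q * [:1,1:]^2)"
      unfolding Q_eq by (simp add: ac_simps)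
    moreover have "p dvd linearized (q * [:1,1:]^2)"
      using \<open>[:1,1:]^2 \<in> I\<close> unfolding I_def by (simp add: dvd_linearized_mult)
    ultimately have "p dvd [:1,1,1:]" using p_f by simp
    thus False using p_Q by simp
  qed
qed

lemma kernel_period:
  fixes lbar p :: "bit poly"
  assumes prim: "primitive_poly m lbar" and "m \<ge> 2" and "irreducible p"
    and "p dvd (linearized lbar)^2 + linearized lbar + 1"
    and "\<not> p dvd [:1,1,1:]"
    and "p dvd linearized ([:0,1:]^k - 1)"
  shows "2 * (2^m - 1) dvd k"
proof -
  define I where "I = {a. p dvd linearized a}"
  have add: "\<And>a b. a \<in> I \<Longrightarrow> b \<in> I \<Longrightarrow> a + b \<in> I"
    unfolding I_def by (simp add: linearized_add)
  have mult: "\<And>a b. b \<in> I \<Longrightarrow> a * b \<in> I"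
    unfolding I_def by (simp add: dvd_linearized_mult)
  have "\<not> is_unit p" using assms(3) irreducible_not_unit by blast
  have "irreducible lbar" using prim unfolding Defs.primitive_poly_def by simp
  moreover have "[:1,1:]^2 * lbar \<in> I" "[:1,1:] * lbar \<notin> I" "[:1,1:]^2 \<notin> I"
    using kernel_of_divisor[OF primitive_poly_values(2)[OF prim assms(2)] \<open>\<not> is_unit p\<close> assms(4,5)]
    unfolding I_def by blast+
  moreover have "[:0,1:]^k - 1 \<in> I" using assms(6) unfolding I_def by simp
  ultimately have "lbar dvd [:0,1:]^k - 1" and "even k"
    using x_power_minus_one_in_ideal[OF add mult] by blast+
  hence "(2^m - 1) dvd k" using primitive_poly_dvd_iff[OF prim] by simp
  then obtain j where j: "k = (2^m - 1) * j" by blast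
  have "odd (2^m - 1 :: nat)" using odd_mersenne[of m] assms(2) by simp
  with \<open>even k\<close> j have "even j" by simp
  with j show ?thesis by (auto elim!: evenE)
qed

section \<open>The quotient \<open>(l\<^sup>2 + l + 1) / Q\<close>\<close>

lemma quotient_divisibility_and_degree:
  assumes prim: "primitive_poly m lbar" and "m \<ge> 2"
  defines "l \<equiv> linearized lbar"
  shows "[:1,1,1:] dvd l^2 + l + 1"
    and "degree ((l^2 + l + 1) div [:1,1,1:]) = 2 * (2^m - 1)"
proof -
  show Q_f: "[:1,1,1:] dvd l^2 + l + 1"
    unfolding l_def using primitive_poly_values(2)[OF assms(1,2)]
    by (rule Q_dvd_square_plus_self_plus_one)
  have "lbar \<noteq> 0" "degree lbar = m" using prim unfolding Defs.primitive_poly_def by auto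
  hence "degree l = 2^m" unfolding l_def by (simp add: degree_linearized)
  hence deg_f: "degree (l^2 + l + 1) = 2 * 2^m"
    by (simp add: degree_square_plus_self_plus_one)
  define G where "G = (l^2 + l + 1) div [:1,1,1:]"
  have factor: "l^2 + l + 1 = [:1,1,1:] * G"
    using Q_f unfolding G_def by (rule dvd_mult_div_cancel[symmetric])
  moreover have "l^2 + l + 1 \<noteq> 0" using deg_f by auto
  ultimately have "G \<noteq> 0" by auto
  hence "degree ([:1,1,1:] * G) = degree ([:1,1,1:] :: bit poly) + degree G"
    by (rule degree_mult_eq[rotated]) simp
  moreover have "degree ([:1,1,1:] :: bit poly) = 2" by simp
  ultimately have "degree (l^2 + l + 1) = 2 + degree G" by (simp only: factor)
  with deg_f show "degree ((l^2 + l + 1) div [:1,1,1:]) = 2 * (2^m - 1)"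
    unfolding G_def[symmetric] by (simp add: diff_mult_distrib2)
qed

text \<open>Any irreducible factor \<open>p\<close> of the quotient is coprime to \<open>Q\<close> (as \<open>f' = 1\<close>) and divides
  \<open>x\<^bsup>2^d\<^esup> - x = L(x\<^sup>d - 1)\<close> with \<open>d = deg p\<close>, so the key lemma forces \<open>deg p\<close> to be the
  full degree of the quotient.\<close>

lemma quotient_irreducible:
  assumes prim: "primitive_poly m lbar" and m: "m \<ge> 2"
  defines "l \<equiv> linearized lbar"
  shows "irreducible ((l^2 + l + 1) div [:1,1,1:])"
proof -
  define f where "f = l^2 + l + 1"
  define G where "G = f div [:1,1,1:]"
  have factor: "f = [:1,1,1:] * G"
    using quotient_divisibility_and_degree(1)[OF prim m] unfolding f_def G_def l_def
    by (rule dvd_mult_div_cancel[symmetric])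
  have deg_G: "degree G = 2 * (2^m - 1)"
    using quotient_divisibility_and_degree(2)[OF prim m] unfolding G_def f_def l_def .
  have "(2::nat)^m \<ge> 2^2" using m by (rule power_increasing) simp
  hence "degree G > 0" using deg_G by simp
  then obtain p where irr: "irreducible p" and p_G: "p dvd G"
    using irreducible\<^sub>d_factor[of G] by auto
  have "pderiv l = 1"
    using primitive_poly_values(1)[OF prim m] by (simp add: l_def pderiv_linearized poly_0_coeff_0)
  hence "pderiv f = 1" unfolding f_def by (simp add: pderiv_add pderiv_power)
  have not_unit: "\<not> p dvd 1" using irr irreducible_not_unit by blast
  have p_Q: "\<not> p dvd [:1,1,1:]"
  proof
    assume "p dvd [:1,1,1:]"
    hence "p * p dvd f" unfolding factor using p_G by (rule mult_dvd_mono)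
    thus False using pderiv_one_no_square_factor \<open>pderiv f = 1\<close> not_unit by blast
  qed
  have "linearized ([:0,1:]^degree p - 1) = [:0,1:]^(2^degree p) - [:0,1:]"
    by (simp only: bit_poly_minus linearized_add linearized_x_power linearized_1)
  hence "p dvd linearized ([:0,1:]^degree p - 1)"
    using irreducible_dvd_frobenius[OF irr] by simp
  moreover have "p dvd l^2 + l + 1" using p_G factor unfolding f_def by (metis dvd_mult)
  ultimately have "2 * (2^m - 1) dvd degree p"
    using kernel_period[OF prim m irr _ p_Q] unfolding l_def by blast
  moreover have "degree p > 0" using not_unit irr by (auto simp: is_unit_iff_degree)
  ultimately have "degree G \<le> degree p" using deg_G by (simp add: dvd_imp_le)
  moreover have "G \<noteq> 0" using \<open>degree G > 0\<close> by auto
  ultimately show ?thesis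
    using irreducible_multiple_of_same_degree[OF irr p_G] unfolding G_def f_def by blast
qed

theorem mainTheorem9:
  fixes m :: nat and lbar :: "bit poly"
  assumes "m \<ge> 2"
    and "primitive_poly m lbar"
  defines "l \<equiv> linearized lbar"
    and "c0 \<equiv> (\<Sum>j\<le>m. coeff lbar (2*j))"
    and "c1 \<equiv> (\<Sum>j\<le>m. coeff lbar (2*j+1))"
  shows "(c0 = 0 \<longleftrightarrow> c1 \<noteq> 0)
     \<and> [:1,1,1:] dvd (l^2 + l + 1)
     \<and> irreducible ((l^2 + l + 1) div [:1,1,1:])
     \<and> degree ((l^2 + l + 1) div [:1,1,1:]) = 2 * (2^m - 1)"
proof -
  have "degree lbar \<le> m" using assms(2) unfolding Defs.primitive_poly_def by simp
  hence "c0 + c1 = poly lbar 1" unfolding c0_def c1_def by (rule even_odd_coeff_sum)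
  also have "\<dots> = 1" using primitive_poly_values(2)[OF assms(2,1)] .
  finally have "c0 = 0 \<longleftrightarrow> c1 \<noteq> 0" using bit_cases[of c0] bit_cases[of c1] by auto
  thus ?thesis
    using quotient_divisibility_and_degree[OF assms(2,1)] quotient_irreducible[OF assms(2,1)]
    unfolding l_def by blast
qed

end
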